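(* Let $q$ be a self-join-free Boolean conjunctive query such that $q$ is saturated and the attack graph of $q$ contains no strong cycle. Let $\mathcal{S}$ be an initial strong component in the attack graph of $q$ with $|\mathcal{S}|\ge 2$. Then for every atom $F\in\mathcal{S}$ there exists an atom $H\in\mathcal{S}$ such that $F\to H$ is an edge of the M-graph of $q$.
   Context: Every relation name has a signature $[n,k]$ ($1\le k\le n$; primary-key positions $1,\dots,k$) and a mode in $\{\mathsf{c},\mathsf{i}\}$. For an atom $F$, $\mathrm{key}(F)$ = variables at primary-key positions, $\mathrm{vars}(F)$ = all its variables. A self-join-free Boolean conjunctive query is a finite set of atoms with distinct relation names. $\mathcal{K}(p)=\{\mathrm{key}(F)\to\mathrm{vars}(F)\mid F\in p\}$; $q^{\mathsf{c}}$ = atoms of mode $\mathsf{c}$; $F^{+,q}$ = variables $x$ with $\mathcal{K}(q\setminus\{F\})\cup\mathcal{K}(q^{\mathsf{c}})\models\mathrm{key}(F)\to x$. Attack graph: vertices atoms of $q$, edge $F\to G$ ($F\ne G$) iff there are atoms $F_0=F,\dots,F_\ell=G$ of $q$ and variables $x_i\in(\mathrm{vars}(F_{i-1})\cap\mathrm{vars}(F_i))\setminus F^{+,q}$. Attack weak if $\mathcal{K}(q)\models\mathrm{key}(F)\to\mathrm{key}(G)$, else strong; a cycle is strong if it contains a strong attack. A strong component is initial if no edge enters it from another strong component. $F$ attacks a variable $x$ if $F$ attacks $N(x)$ in $q\cup\{N(x)\}$ ($N$ fresh, signature $[1,1]$). A sequential proof for $\mathcal{K}(q)\models Z\to w$: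 atoms $F_1,\dots,F_\ell$ of $q$ with $\mathrm{key}(F_i)\subseteq Z\cup\bigcup_{j<i}\mathrm{vars}(F_j)$ and $w\in\mathrm{vars}(F_k)$ for some $k$. $Z\to w$ is internal to $q$ if some such proof has no atom attacking a variable of $Z\cup\{w\}$ and $Z\subseteq\mathrm{vars}(F)$ for some $F\in q$. $q$ is saturated if $\mathcal{K}(q^{\mathsf{c}})\models\sigma$ for every $\sigma$ internal to $q$. The M-graph of $q$: vertices atoms of $q$, edge $F\to G$ ($F\ne G$) iff $\mathcal{K}(q^{\mathsf{c}})\models\mathrm{vars}(F)\to\mathrm{key}(G)$. *)

theory Defs
  imports Main
begin

datatype mode = ModeC | ModeI

datatype ('v, 'c) trm = Var 'v | Cst 'c

text \<open>An atom: relation name, argument list (length n), number k of primary-key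
  positions (positions 1..k), and the mode of its relation name.\<close>
datatype ('r, 'v, 'c) atom = Atom (rel: 'r) (args: "('v, 'c) trm list") (kl: nat) (md: mode)

definition vars :: "('r, 'v, 'c) atom \<Rightarrow> 'v set" where
  "vars F = {x. Var x \<in> set (args F)}"

definition key :: "('r, 'v, 'c) atom \<Rightarrow> 'v set" where
  "key F = {x. Var x \<in> set (take (kl F) (args F))}"

definition wf_atom :: "('r, 'v, 'c) atom \<Rightarrow> bool" where
  "wf_atom F \<longleftrightarrow> 1 \<le> kl F \<and> kl F \<le> length (args F)"

definition sjf_query :: "('r, 'v, 'c) atom set \<Rightarrow> bool" where
  "sjf_query q \<longleftrightarrow> finite q \<and> inj_on rel q \<and> (\<forall>F\<in>q. wf_atom F)"

definition cpart :: "('r, 'v, 'c) atom set \<Rightarrow> ('r, 'v, 'c) atom set" where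
  "cpart q = {F \<in> q. md F = ModeC}"

definition Kfd :: "('r, 'v, 'c) atom set \<Rightarrow> ('v set \<times> 'v set) set" where
  "Kfd p = {(key F, vars F) | F. F \<in> p}"

inductive_set fd_closure :: "('v set \<times> 'v set) set \<Rightarrow> 'v set \<Rightarrow> 'v set"
  for \<Sigma> :: "('v set \<times> 'v set) set" and Z :: "'v set" where
  base: "x \<in> Z \<Longrightarrow> x \<in> fd_closure \<Sigma> Z"
| step: "(X, Y) \<in> \<Sigma> \<Longrightarrow> (\<And>x. x \<in> X \<Longrightarrow> x \<in> fd_closure \<Sigma> Z) \<Longrightarrow> y \<in> Y \<Longrightarrow> y \<in> fd_closure \<Sigma> Z"

definition fd_implies :: "('v set \<times> 'v set) set \<Rightarrow> 'v set \<Rightarrow> 'v set \<Rightarrow> bool" where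
  "fd_implies \<Sigma> Z W \<longleftrightarrow> W \<subseteq> fd_closure \<Sigma> Z"

definition Fplus :: "('r, 'v, 'c) atom set \<Rightarrow> ('r, 'v, 'c) atom \<Rightarrow> 'v set" where
  "Fplus q F = fd_closure (Kfd (q - {F}) \<union> Kfd (cpart q)) (key F)"

definition attacks :: "('r, 'v, 'c) atom set \<Rightarrow> ('r, 'v, 'c) atom \<Rightarrow> ('r, 'v, 'c) atom \<Rightarrow> bool" where
  "attacks q F G \<longleftrightarrow> F \<in> q \<and> G \<in> q \<and> F \<noteq> G \<and>
     (\<exists>p. length p \<ge> 2 \<and> hd p = F \<and> last p = G \<and> set p \<subseteq> q \<and>
        (\<forall>i. Suc i < length p \<longrightarrow> (vars (p ! i) \<inter> vars (p ! Suc i)) - Fplus q F \<noteq> {}))"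

definition attack_rel :: "('r, 'v, 'c) atom set \<Rightarrow> (('r, 'v, 'c) atom \<times> ('r, 'v, 'c) atom) set" where
  "attack_rel q = {(F, G). attacks q F G}"

definition weak_attack :: "('r, 'v, 'c) atom set \<Rightarrow> ('r, 'v, 'c) atom \<Rightarrow> ('r, 'v, 'c) atom \<Rightarrow> bool" where
  "weak_attack q F G \<longleftrightarrow> attacks q F G \<and> fd_implies (Kfd q) (key F) (key G)"

definition strong_attack :: "('r, 'v, 'c) atom set \<Rightarrow> ('r, 'v, 'c) atom \<Rightarrow> ('r, 'v, 'c) atom \<Rightarrow> bool" where
  "strong_attack q F G \<longleftrightarrow> attacks q F G \<and> \<not> fd_implies (Kfd q) (key F) (key G)"

definition has_strong_cycle :: "('r, 'v, 'c) atom set \<Rightarrow> bool" where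
  "has_strong_cycle q \<longleftrightarrow> (\<exists>F G. strong_attack q F G \<and> (G, F) \<in> (attack_rel q)\<^sup>*)"

definition strong_component :: "('r, 'v, 'c) atom set \<Rightarrow> ('r, 'v, 'c) atom set \<Rightarrow> bool" where
  "strong_component q S \<longleftrightarrow> (\<exists>F\<in>q. S = {G \<in> q. (F, G) \<in> (attack_rel q)\<^sup>* \<and> (G, F) \<in> (attack_rel q)\<^sup>*})"

definition initial_strong_component :: "('r, 'v, 'c) atom set \<Rightarrow> ('r, 'v, 'c) atom set \<Rightarrow> bool" where
  "initial_strong_component q S \<longleftrightarrow> strong_component q S \<and>
     \<not> (\<exists>G H. G \<notin> S \<and> H \<in> S \<and> attacks q G H)"

text \<open>Attacks on a variable x: F attacks N(x) in q \<union> {N(x)}, with N a fresh relation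
  name of signature [1,1]. Freshness is realised by lifting relation names to 'r option,
  with N named None. (The mode of N is irrelevant; we take it to be i.)\<close>
definition lift_atom :: "('r, 'v, 'c) atom \<Rightarrow> ('r option, 'v, 'c) atom" where
  "lift_atom = map_atom Some id id"

definition N_atom :: "'v \<Rightarrow> ('r option, 'v, 'c) atom" where
  "N_atom x = Atom None [Var x] 1 ModeI"

definition attacks_var :: "('r, 'v, 'c) atom set \<Rightarrow> ('r, 'v, 'c) atom \<Rightarrow> 'v \<Rightarrow> bool" where
  "attacks_var q F x \<longleftrightarrow> attacks (lift_atom ` q \<union> {N_atom x}) (lift_atom F) (N_atom x)"

definition seq_proof :: "('r, 'v, 'c) atom set \<Rightarrow> 'v set \<Rightarrow> 'v \<Rightarrow> ('r, 'v, 'c) atom list \<Rightarrow> bool" where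
  "seq_proof q Z w ps \<longleftrightarrow> set ps \<subseteq> q \<and>
     (\<forall>i < length ps. key (ps ! i) \<subseteq> Z \<union> (\<Union>j<i. vars (ps ! j))) \<and>
     (\<exists>k < length ps. w \<in> vars (ps ! k))"

definition internal :: "('r, 'v, 'c) atom set \<Rightarrow> 'v set \<Rightarrow> 'v \<Rightarrow> bool" where
  "internal q Z w \<longleftrightarrow>
     (\<exists>ps. seq_proof q Z w ps \<and> (\<forall>G\<in>set ps. \<forall>x \<in> Z \<union> {w}. \<not> attacks_var q G x)) \<and>
     (\<exists>F\<in>q. Z \<subseteq> vars F)"

definition saturated :: "('r, 'v, 'c) atom set \<Rightarrow> bool" where
  "saturated q \<longleftrightarrow> (\<forall>Z w. internal q Z w \<longrightarrow> fd_implies (Kfd (cpart q)) Z {w})"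

definition M_edge :: "('r, 'v, 'c) atom set \<Rightarrow> ('r, 'v, 'c) atom \<Rightarrow> ('r, 'v, 'c) atom \<Rightarrow> bool" where
  "M_edge q F G \<longleftrightarrow> F \<in> q \<and> G \<in> q \<and> F \<noteq> G \<and> fd_implies (Kfd (cpart q)) (vars F) (key G)"

end

theory Submission imports Defs begin

text \<open>Let \<open>F \<in> S\<close>. As \<open>|S| \<ge> 2\<close>, \<open>F\<close> attacks some \<open>G \<in> S\<close>, and since
  \<open>G\<close> reaches \<open>F\<close> back and no cycle is strong, this attack is weak:
  \<open>K(q) \<Turnstile> key F \<rightarrow> key G\<close>. Follow a derivation of \<open>key G\<close> from \<open>key F\<close> up to
  the first point where the key of an atom \<open>H \<noteq> F\<close> of \<open>S\<close> is covered; up to there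
  only atoms outside \<open>S\<close> are used, so \<open>key H\<close> is derived from \<open>vars F\<close> by atoms
  outside \<open>S\<close>. Because \<open>S\<close> is initial, none of these atoms attacks a variable of
  \<open>F\<close> or of \<open>H\<close>, so every \<open>vars F \<rightarrow> x\<close> with \<open>x \<in> key H\<close> is internal, and
  saturation yields \<open>K(q\<^sup>c) \<Turnstile> vars F \<rightarrow> key H\<close>.\<close>

lemma key_subset_vars: "key F \<subseteq> vars F"
  unfolding key_def vars_def by (auto dest: in_set_takeD)

lemma finite_key: "finite (key F)"
proof -
  have "key F = Var -` set (take (kl F) (args F))"
    unfolding key_def by auto
  then show ?thesis
    by (simp add: finite_vimageI inj_def)
qed

lemma fd_closure_mono:
  assumes "x \<in> fd_closure \<Sigma> Z" "\<Sigma> \<subseteq> \<Sigma>'"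
  shows "x \<in> fd_closure \<Sigma>' Z"
  using assms by (induction rule: fd_closure.induct) (auto intro: fd_closure.intros)

lemma Kfd_mono: "p \<subseteq> p' \<Longrightarrow> Kfd p \<subseteq> Kfd p'"
  unfolding Kfd_def by blast

lemma vars_lift_atom [simp]: "vars (lift_atom F) = vars F"
  and key_lift_atom [simp]: "key (lift_atom F) = key F"
  and md_lift_atom [simp]: "md (lift_atom F) = md F"
  unfolding lift_atom_def vars_def key_def by (cases F; simp add: trm.map_id0)+

lemma inj_lift_atom: "inj lift_atom"
  unfolding lift_atom_def by (intro atom.inj_map inj_Some inj_on_id)

lemma lift_atom_neq_N_atom: "lift_atom F \<noteq> N_atom x"
  unfolding lift_atom_def N_atom_def by (cases F) simp

lemma vars_N_atom [simp]: "vars (N_atom x) = {x}"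
  unfolding N_atom_def vars_def by simp

lemma Kfd_lift_atom: "Kfd (lift_atom ` p) = Kfd p"
  unfolding Kfd_def by force

lemma Fplus_subset_Fplus_lift:
  "Fplus q P \<subseteq> Fplus (lift_atom ` q \<union> {N_atom x}) (lift_atom P)"
proof -
  let ?q' = "lift_atom ` q \<union> {N_atom x}"
  have "lift_atom ` (q - {P}) \<subseteq> ?q' - {lift_atom P}"
    by (auto dest: injD[OF inj_lift_atom])
  moreover have "lift_atom ` cpart q \<subseteq> cpart ?q'"
    unfolding cpart_def by auto
  ultimately have "Kfd (q - {P}) \<union> Kfd (cpart q) \<subseteq> Kfd (?q' - {lift_atom P}) \<union> Kfd (cpart ?q')"
    using Kfd_mono by (metis Kfd_lift_atom Un_mono)
  then show ?thesis
    unfolding Fplus_def by (auto intro: fd_closure_mono)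
qed

lemma attacks_iff_successively:
  "attacks q F G \<longleftrightarrow> F \<in> q \<and> G \<in> q \<and> F \<noteq> G \<and>
     (\<exists>p. length p \<ge> 2 \<and> hd p = F \<and> last p = G \<and> set p \<subseteq> q \<and>
        successively (\<lambda>A B. vars A \<inter> vars B - Fplus q F \<noteq> {}) p)"
  unfolding attacks_def successively_conv_nth ..

text \<open>The witness path for the attack on \<open>N(x)\<close> is cut at the first occurrence of
  \<open>N(x)\<close>, which is then replaced by \<open>H\<close>; the link into \<open>H\<close> is the variable \<open>x\<close>.\<close>

lemma attacks_if_attacks_var:
  assumes "attacks_var q P x" "x \<in> vars H" "H \<in> q" "P \<in> q" "P \<noteq> H"
  shows "attacks q P H"
proof -
  let ?q' = "lift_atom ` q \<union> {N_atom x}"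
  let ?linked = "\<lambda>X A B. vars A \<inter> vars B - X \<noteq> {}"
  obtain p where p: "length p \<ge> 2" "hd p = lift_atom P" "last p = N_atom x" "set p \<subseteq> ?q'"
    "successively (?linked (Fplus ?q' (lift_atom P))) p"
    using assms(1) unfolding attacks_var_def attacks_iff_successively by blast
  have "N_atom x \<in> set p"
    using p(1,3) by (metis last_in_set list.size(3) not_numeral_le_zero)
  then obtain ys zs where p_split: "p = ys @ N_atom x # zs" "N_atom x \<notin> set ys"
    using split_list_first by metis
  have "ys \<noteq> []"
    using p(2) p_split(1) lift_atom_neq_N_atom by (metis append.left_neutral list.sel(1))
  have "set ys \<subseteq> lift_atom ` q"
    using p(4) p_split by auto
  then obtain us where ys: "ys = map lift_atom us"
    by (metis ex_map_conv image_iff subset_iff)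
  have "us \<noteq> []" "set us \<subseteq> q"
    using \<open>ys \<noteq> []\<close> \<open>set ys \<subseteq> lift_atom ` q\<close> inj_lift_atom
    by (auto simp: ys dest: injD)
  have "hd us = P"
    using p(2) p_split(1) \<open>ys \<noteq> []\<close> inj_lift_atom by (auto simp: ys hd_map dest: injD)
  have links: "successively (?linked (Fplus ?q' (lift_atom P))) ys"
    "x \<in> vars (last ys)" "x \<notin> Fplus ?q' (lift_atom P)"
    using p(5) \<open>ys \<noteq> []\<close> by (auto simp: p_split successively_append_iff)
  have "successively (?linked (Fplus q P)) (us @ [H])"
    using links Fplus_subset_Fplus_lift[of q P x] \<open>us \<noteq> []\<close> assms(2)
    by (auto simp: ys successively_map successively_append_iff last_map
             elim!: successively_mono)
  moreover have "length (us @ [H]) \<ge> 2" "hd (us @ [H]) = P" "set (us @ [H]) \<subseteq> q"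
    using \<open>us \<noteq> []\<close> \<open>hd us = P\<close> \<open>set us \<subseteq> q\<close> assms(3)
    by (auto simp: Suc_le_eq)
  ultimately show ?thesis
    unfolding attacks_iff_successively using assms(3-5) by (metis last_snoc)
qed

definition derivation :: "('r, 'v, 'c) atom set \<Rightarrow> 'v set \<Rightarrow> ('r, 'v, 'c) atom list \<Rightarrow> bool" where
  "derivation R Z ps \<longleftrightarrow> set ps \<subseteq> R \<and>
     (\<forall>i < length ps. key (ps ! i) \<subseteq> Z \<union> \<Union> (vars ` set (take i ps)))"

lemma derivation_Nil: "derivation R Z []"
  unfolding derivation_def by simp

lemma derivation_append:
  assumes "derivation R Z ps" "derivation R Z qs"
  shows "derivation R Z (ps @ qs)"
  unfolding derivation_def
proof (intro conjI allI impI)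
  show "set (ps @ qs) \<subseteq> R"
    using assms unfolding derivation_def by auto
  fix i assume i: "i < length (ps @ qs)"
  show "key ((ps @ qs) ! i) \<subseteq> Z \<union> \<Union> (vars ` set (take i (ps @ qs)))"
  proof (cases "i < length ps")
    case True
    then show ?thesis
      using assms(1) unfolding derivation_def by (auto simp: nth_append)
  next
    case False
    then have "key (qs ! (i - length ps)) \<subseteq> Z \<union> \<Union> (vars ` set (take (i - length ps) qs))"
      using i assms(2) unfolding derivation_def by auto
    then show ?thesis
      using False by (auto simp: nth_append)
  qed
qed

lemma derivation_snoc:
  assumes "derivation R Z ps" "A \<in> R" "key A \<subseteq> Z \<union> \<Union> (vars ` set ps)"
  shows "derivation R Z (ps @ [A])"
  using assms unfolding derivation_def by (auto simp: nth_append)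

lemma derivation_covering_finite:
  assumes "finite X" "\<And>x. x \<in> X \<Longrightarrow> \<exists>ps. derivation R Z ps \<and> x \<in> Z \<union> \<Union> (vars ` set ps)"
  shows "\<exists>ps. derivation R Z ps \<and> X \<subseteq> Z \<union> \<Union> (vars ` set ps)"
  using assms
proof (induction X rule: finite_induct)
  case empty
  show ?case
    using derivation_Nil by blast
next
  case (insert x X)
  then obtain ps qs where "derivation R Z ps" "X \<subseteq> Z \<union> \<Union> (vars ` set ps)"
    "derivation R Z qs" "x \<in> Z \<union> \<Union> (vars ` set qs)"
    by (metis insertCI)
  then show ?case
    by (intro exI[of _ "ps @ qs"]) (auto intro: derivation_append)
qed

lemma derivation_if_fd_closure:
  assumes "x \<in> fd_closure (Kfd R) Z"
  shows "\<exists>ps. derivation R Z ps \<and> x \<in> Z \<union> \<Union> (vars ` set ps)"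
  using assms
proof (induction rule: fd_closure.induct)
  case (base x)
  then show ?case
    using derivation_Nil by blast
next
  case (step X Y y)
  then obtain A where A: "X = key A" "Y = vars A" "A \<in> R"
    unfolding Kfd_def by auto
  obtain ps where "derivation R Z ps" "key A \<subseteq> Z \<union> \<Union> (vars ` set ps)"
    using derivation_covering_finite[OF finite_key] step.IH A(1) by metis
  then show ?case
    using derivation_snoc A step.hyps(3) by (intro exI[of _ "ps @ [A]"]) auto
qed

lemma seq_proof_if_derivation:
  assumes "derivation R Z ps" "x \<in> \<Union> (vars ` set ps)"
  shows "seq_proof R Z x ps"
proof -
  have "set (take i ps) = (!) ps ` {..<i}" if "i < length ps" for i
    using that nth_image[of i ps] by (simp add: lessThan_atLeast0)
  then have "\<Union> (vars ` set (take i ps)) = (\<Union>j<i. vars (ps ! j))" if "i < length ps" for i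
    using that by (simp add: image_image)
  then show ?thesis
    using assms unfolding derivation_def seq_proof_def by (auto simp: in_set_conv_nth)
qed

lemma seq_proof_if_fd_closure:
  assumes "x \<in> fd_closure (Kfd R) Z" "x \<notin> Z"
  shows "\<exists>ps. seq_proof R Z x ps"
proof -
  obtain ps where "derivation R Z ps" "x \<in> Z \<union> \<Union> (vars ` set ps)"
    using derivation_if_fd_closure[OF assms(1)] by blast
  then show ?thesis
    using assms(2) seq_proof_if_derivation by fast
qed

lemma seq_proof_mono: "seq_proof R Z x ps \<Longrightarrow> R \<subseteq> q \<Longrightarrow> seq_proof q Z x ps"
  unfolding seq_proof_def by blast

lemma strong_component_reachable:
  assumes "strong_component q S" "F \<in> S" "G \<in> S"
  shows "(F, G) \<in> (attack_rel q)\<^sup>*"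
  using assms unfolding strong_component_def by (blast intro: rtrancl_trans)

lemma strong_component_attacks_inside:
  assumes "strong_component q S" "card S \<ge> 2" "F \<in> S"
  obtains G where "G \<in> S" "attacks q F G"
proof -
  have "finite S" "\<not> card S \<le> Suc 0"
    using assms(2) by (auto intro: card_ge_0_finite)
  then obtain F' where "F' \<in> S" "F' \<noteq> F"
    using assms(3) card_le_Suc0_iff_eq by blast
  then have "(F, F') \<in> (attack_rel q)\<^sup>+"
    using strong_component_reachable[OF assms(1,3)] by (metis rtranclD)
  then obtain G where G: "(F, G) \<in> attack_rel q" "(G, F') \<in> (attack_rel q)\<^sup>*"
    by (meson tranclD)
  obtain F0 where "F0 \<in> q" and S: "S = {G \<in> q. (F0, G) \<in> (attack_rel q)\<^sup>* \<and> (G, F0) \<in> (attack_rel q)\<^sup>*}"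
    using assms(1) unfolding strong_component_def by blast
  have "G \<in> S"
    using G \<open>F' \<in> S\<close> \<open>F \<in> S\<close> unfolding S attack_rel_def attacks_def
    by (blast intro: rtrancl_trans rtrancl_into_rtrancl)
  then show thesis
    using G(1) that unfolding attack_rel_def by blast
qed

lemma attack_weak_if_no_strong_cycle:
  assumes "\<not> has_strong_cycle q" "attacks q F G" "(G, F) \<in> (attack_rel q)\<^sup>*"
  shows "key G \<subseteq> fd_closure (Kfd q) (key F)"
  using assms unfolding has_strong_cycle_def strong_attack_def fd_implies_def by blast

lemma key_in_fd_closure_outside:
  assumes "F \<in> S" "G \<in> S" "G \<noteq> F" "key G \<subseteq> fd_closure (Kfd q) (key F)"
  obtains H where "H \<in> S" "H \<noteq> F" "key H \<subseteq> fd_closure (Kfd (q - S)) (vars F)"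
proof (rule ccontr)
  let ?D = "fd_closure (Kfd (q - S)) (vars F)"
  assume none: "\<not> thesis"
  note witness = that
  have "x \<in> ?D" if "x \<in> fd_closure (Kfd q) (key F)" for x
    using that
  proof (induction rule: fd_closure.induct)
    case (base x)
    then show ?case
      using key_subset_vars[of F] by (auto intro: fd_closure.base)
  next
    case (step X Y y)
    then obtain A where A: "X = key A" "Y = vars A" "A \<in> q"
      unfolding Kfd_def by auto
    show ?case
    proof (cases "A \<in> S")
      case True
      moreover have "key A \<subseteq> ?D"
        using step.IH A(1) by blast
      ultimately have "A = F"
        using witness none by blast
      then show ?thesis
        using step.hyps(3) A(2) by (blast intro: fd_closure.base)
    next
      case False
      then have "(X, Y) \<in> Kfd (q - S)"
        using A unfolding Kfd_def by blast
      then show ?thesis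
        using step by (blast intro: fd_closure.step)
    qed
  qed
  then show False
    using witness none assms(2-4) by blast
qed

lemma internal_if_unattacked:
  assumes unattacked: "\<And>G H. G \<notin> S \<Longrightarrow> H \<in> S \<Longrightarrow> \<not> attacks q G H"
    and "S \<subseteq> q" "F \<in> S" "H \<in> S" "x \<in> vars H"
    and "x \<in> fd_closure (Kfd (q - S)) (vars F)" "x \<notin> vars F"
  shows "internal q (vars F) x"
proof -
  obtain ps where ps: "seq_proof (q - S) (vars F) x ps"
    using seq_proof_if_fd_closure[OF assms(6,7)] ..
  have "\<not> attacks_var q G y" if "G \<in> set ps" "y \<in> vars F \<union> {x}" for G y
  proof
    assume G_y: "attacks_var q G y"
    have "G \<in> q" "G \<notin> S"
      using ps that(1) unfolding seq_proof_def by auto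
    have "attacks q G A" if "A \<in> S" "y \<in> vars A" for A
      using attacks_if_attacks_var[OF G_y \<open>y \<in> vars A\<close>] \<open>A \<in> S\<close> \<open>G \<in> q\<close> \<open>G \<notin> S\<close> assms(2)
      by blast
    moreover have "y \<in> vars F \<or> y \<in> vars H"
      using that(2) assms(5) by blast
    ultimately show False
      using unattacked \<open>G \<notin> S\<close> assms(3,4) by blast
  qed
  moreover have "seq_proof q (vars F) x ps"
    using seq_proof_mono[OF ps Diff_subset] .
  ultimately show ?thesis
    unfolding internal_def using assms(2,3) by blast
qed

lemma key_subset_fd_closure_cpart:
  assumes "saturated q"
    and unattacked: "\<And>G H. G \<notin> S \<Longrightarrow> H \<in> S \<Longrightarrow> \<not> attacks q G H"
    and "S \<subseteq> q" "F \<in> S" "H \<in> S" "key H \<subseteq> fd_closure (Kfd (q - S)) (vars F)"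
  shows "key H \<subseteq> fd_closure (Kfd (cpart q)) (vars F)"
proof
  fix x assume "x \<in> key H"
  show "x \<in> fd_closure (Kfd (cpart q)) (vars F)"
  proof (cases "x \<in> vars F")
    case True
    then show ?thesis
      by (fact fd_closure.base)
  next
    case False
    have "internal q (vars F) x"
      using internal_if_unattacked[OF unattacked assms(3-5)
          subsetD[OF key_subset_vars \<open>x \<in> key H\<close>] subsetD[OF assms(6) \<open>x \<in> key H\<close>] False] .
    then show ?thesis
      using assms(1) unfolding saturated_def fd_implies_def by blast
  qed
qed

theorem lemma29:
  fixes q :: "('r, 'v, 'c) atom set" and S :: "('r, 'v, 'c) atom set"
  assumes "sjf_query q"
    and "saturated q"
    and "\<not> has_strong_cycle q"
    and "initial_strong_component q S"
    and "card S \<ge> 2"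
  shows "\<forall>F\<in>S. \<exists>H\<in>S. M_edge q F H"
proof
  fix F assume "F \<in> S"
  have component: "strong_component q S" and S_q: "S \<subseteq> q"
    and unattacked: "\<And>G H. G \<notin> S \<Longrightarrow> H \<in> S \<Longrightarrow> \<not> attacks q G H"
    using assms(4) unfolding initial_strong_component_def strong_component_def by auto
  obtain G where G: "G \<in> S" "attacks q F G"
    using strong_component_attacks_inside[OF component assms(5) \<open>F \<in> S\<close>] .
  have "G \<noteq> F"
    using G(2) unfolding attacks_def by blast
  have "key G \<subseteq> fd_closure (Kfd q) (key F)"
    using attack_weak_if_no_strong_cycle[OF assms(3) G(2)]
      strong_component_reachable[OF component G(1) \<open>F \<in> S\<close>] .
  then obtain H where H: "H \<in> S" "H \<noteq> F" "key H \<subseteq> fd_closure (Kfd (q - S)) (vars F)"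
    using key_in_fd_closure_outside \<open>F \<in> S\<close> G(1) \<open>G \<noteq> F\<close> by metis
  then have "key H \<subseteq> fd_closure (Kfd (cpart q)) (vars F)"
    using key_subset_fd_closure_cpart[OF assms(2) unattacked S_q \<open>F \<in> S\<close>] by blast
  then show "\<exists>H\<in>S. M_edge q F H"
    using H(1,2) \<open>F \<in> S\<close> S_q unfolding M_edge_def fd_implies_def by blast
qed

end
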